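(* Let $x\in\mathbb X$ and $N\Subset\mathbb X\setminus\{x\}$. Then \[ |\gamma(x,N)|\,\alpha^N\le\sum_{\substack{\mathcal X\subset\mathbf F(x):\\ \left(\bigcup_{X\in\mathcal X}X\right)\setminus\{x\}=N}}\ \prod_{X\in\mathcal X}\Big(\max\Big\{|W(X)|,\ 1+|W(X)-1|\alpha^S\ \Big|\ \varnothing\neq S\subset X\setminus\{x\}\Big\}-1\Big). \]
   Context: $\mathbb X$ is a finite or countably infinite set, $X\Subset\mathbb X$ means finite subset, $\mathbf F$ is the set of finite subsets, $\mathbf F(x)=\{X\Subset\mathbb X\mid x\in X\}$. Fix $W:\mathbf F\to\mathbb C$, $r:\mathbb X\to[0,1)$, $\alpha=\frac r{1-r}$, $\alpha^S=\prod_{s\in S}\alpha(s)$. Boltzmann factor conditioned on $B$: with $W(X\mid B)=\prod_{C\subset B}W(X\cup C)$ if $X\cap B=\varnothing$, $0$ if $X=\{y\}$ with $y\in B$, $1$ otherwise, set $\kappa(X\mid B)=\prod_{\varnothing\neq S\subset X}W(S\mid B)$ and $\kappa(x\mid B)=\kappa(\{x\}\mid B)$. Kernel: $\gamma(x,N)=\gamma(x,N\mid\varnothing)$ where $\gamma(x,N\mid B)=\sum_{M\subset N}(-1)^{|N\setminus M|}\kappa(x\mid B\cup M)$. A maximum $\max\{a,\ b_S\mid S\in\mathcal S\}$ denotes the maximum of $a$ and all $b_S$ (equal to $a$ if $\mathcal S=\varnothing$). The empty collection $\mathcal X=\varnothing$ has union $\varnothing$; empty products equal $1$. *)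

theory Defs
  imports "HOL-Analysis.Analysis" "HOL-Library.Countable"
begin

definition alpha :: "('a \<Rightarrow> real) \<Rightarrow> 'a \<Rightarrow> real" where
  "alpha r s = r s / (1 - r s)"

definition alpha_pow :: "('a \<Rightarrow> real) \<Rightarrow> 'a set \<Rightarrow> real" where
  "alpha_pow r S = (\<Prod>s\<in>S. alpha r s)"

definition Wcond :: "('a set \<Rightarrow> complex) \<Rightarrow> 'a set \<Rightarrow> 'a set \<Rightarrow> complex" where
  "Wcond W X B =
     (if X \<inter> B = {} then (\<Prod>C\<in>Pow B. W (X \<union> C))
      else if (\<exists>y\<in>B. X = {y}) then 0 else 1)"

definition kappa :: "('a set \<Rightarrow> complex) \<Rightarrow> 'a set \<Rightarrow> 'a set \<Rightarrow> complex" where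
  "kappa W X B = (\<Prod>S\<in>{S. S \<subseteq> X \<and> S \<noteq> {}}. Wcond W S B)"

definition kappa_pt :: "('a set \<Rightarrow> complex) \<Rightarrow> 'a \<Rightarrow> 'a set \<Rightarrow> complex" where
  "kappa_pt W x B = kappa W {x} B"

definition gamma_cond :: "('a set \<Rightarrow> complex) \<Rightarrow> 'a \<Rightarrow> 'a set \<Rightarrow> 'a set \<Rightarrow> complex" where
  "gamma_cond W x N B =
     (\<Sum>M\<in>Pow N. (-1) ^ card (N - M) * kappa_pt W x (B \<union> M))"

definition gamma :: "('a set \<Rightarrow> complex) \<Rightarrow> 'a \<Rightarrow> 'a set \<Rightarrow> complex" where
  "gamma W x N = gamma_cond W x N {}"

definition Fx :: "'a \<Rightarrow> 'a set set" where
  "Fx x = {X. finite X \<and> x \<in> X}"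

definition maxterm :: "('a set \<Rightarrow> complex) \<Rightarrow> ('a \<Rightarrow> real) \<Rightarrow> 'a \<Rightarrow> 'a set \<Rightarrow> real" where
  "maxterm W r x X =
     Max (insert (cmod (W X))
          ((\<lambda>S. 1 + cmod (W X - 1) * alpha_pow r S) ` {S. S \<subseteq> X - {x} \<and> S \<noteq> {}}))"

end

(* With w(C) = W({x} \<union> C), kappa(x | M) is the product of w over all subsets of M, so
   gamma(x, N) is the N-th finite difference Delta at the empty set of M \<mapsto> \<Prod>C\<subseteq>M. w(C).
   By inclusion-exclusion the right-hand side is the same finite difference of
   M \<mapsto> \<Prod>C\<subseteq>M. (1 + p(C)), where p(C) = maxterm({x} \<union> C) - 1.
   The comparison is by induction on N.  Removing a point a, the Leibniz rule splits the
   difference of the product into differences of the product over sets avoiding a times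
   differences of (product over sets containing a) - 1.  Every factor w(C \<union> {a}) of the latter
   satisfies alpha(a) |w - 1| \<le> p, which pays for the factor alpha(a) on the left; at the bottom
   of the recursion c |\<Prod> w - 1| \<le> \<Prod> (1 + p) - 1 is a telescoping estimate. *)

theory Submission
  imports Defs
begin

section \<open>Finite differences over subsets\<close>

context comm_monoid_set
begin

lemma Pow_insert:
  assumes "finite A" "a \<notin> A"
  shows "F g (Pow (insert a A)) = F g (Pow A) \<^bold>* F (\<lambda>B. g (insert a B)) (Pow A)"
proof -
  have "inj_on (insert a) (Pow A)"
    using assms(2) by (auto simp: inj_on_def insert_ident)
  moreover have "Pow A \<inter> insert a ` Pow A = {}"
    using assms(2) by blast
  ultimately show ?thesis
    using assms(1) by (simp add: Set.Pow_insert union_disjoint reindex comp_def)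
qed

end

definition Delta :: "('a set \<Rightarrow> 'b::comm_ring_1) \<Rightarrow> 'a set \<Rightarrow> 'a set \<Rightarrow> 'b" where
  "Delta F L A = (\<Sum>M\<in>Pow L. (-1) ^ card (L - M) * F (A \<union> M))"

lemma gamma_cond_eq_Delta: "gamma_cond W x N B = Delta (kappa_pt W x) N B"
  by (simp add: gamma_cond_def Delta_def)

lemma Delta_empty [simp]: "Delta F {} A = F A"
  by (simp add: Delta_def)

lemma Delta_cong:
  assumes "\<And>M. M \<subseteq> L \<Longrightarrow> F (A \<union> M) = G (A \<union> M)"
  shows "Delta F L A = Delta G L A"
  using assms by (auto simp: Delta_def intro!: sum.cong)

lemma Delta_diff: "Delta (\<lambda>M. F M - G M) L A = Delta F L A - Delta G L A"
  by (simp add: Delta_def algebra_simps sum_subtractf)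

lemma Delta_insert:
  assumes "finite L" "a \<notin> L"
  shows "Delta F (insert a L) A = Delta F L (insert a A) - Delta F L A"
proof -
  have "(\<Sum>M\<in>Pow L. (-1) ^ card (insert a L - M) * F (A \<union> M))
      = (\<Sum>M\<in>Pow L. - ((-1) ^ card (L - M) * F (A \<union> M)))"
  proof (rule sum.cong)
    fix M assume "M \<in> Pow L"
    then have "insert a L - M = insert a (L - M)" "finite (L - M)" "a \<notin> L - M"
      using assms by auto
    then show "(-1) ^ card (insert a L - M) * F (A \<union> M) = - ((-1) ^ card (L - M) * F (A \<union> M))"
      by simp
  qed simp
  moreover have "insert a L - insert a M = L - M" for M
    using assms(2) by auto
  ultimately show ?thesis
    using assms by (simp add: Delta_def sum.Pow_insert sum_negf)
qed

lemma Delta_minus_const: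
  assumes "finite L" "L \<noteq> {}"
  shows "Delta (\<lambda>M. F M - c) L A = Delta F L A"
proof -
  obtain a L' where "L = insert a L'" "a \<notin> L'"
    using assms(2) by (meson ex_in_conv mk_disjoint_insert)
  with assms(1) have "Delta (\<lambda>_. c) L A = Delta (\<lambda>_. c) L' (insert a A) - Delta (\<lambda>_. c) L' A"
    by (simp add: Delta_insert)
  then have "Delta (\<lambda>_. c) L A = 0"
    by (simp add: Delta_def)
  then show ?thesis
    using Delta_diff[of F "\<lambda>_. c"] by simp
qed

lemma Delta_mult:
  assumes "finite L"
  shows "Delta (\<lambda>M. f M * g M) L A = (\<Sum>K\<in>Pow L. Delta f K A * Delta g (L - K) (A \<union> K))"
  using assms
proof (induction L arbitrary: A rule: finite_induct)
  case empty
  then show ?case by simp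
next
  case (insert a L)
  have summand: "Delta f K A * Delta g (insert a L - K) (A \<union> K)
      + Delta f (insert a K) A * Delta g (insert a L - insert a K) (A \<union> insert a K)
    = Delta f K (insert a A) * Delta g (L - K) (insert a A \<union> K) - Delta f K A * Delta g (L - K) (A \<union> K)"
    if "K \<in> Pow L" for K
  proof -
    have "finite K" "a \<notin> K" "finite (L - K)" "a \<notin> L - K"
      using that insert.hyps finite_subset by auto
    moreover have "insert a L - K = insert a (L - K)" "insert a L - insert a K = L - K"
      using that insert.hyps by auto
    ultimately show ?thesis
      by (simp add: Delta_insert algebra_simps)
  qed
  have "(\<Sum>K\<in>Pow (insert a L). Delta f K A * Delta g (insert a L - K) (A \<union> K))
      = (\<Sum>K\<in>Pow L. Delta f K (insert a A) * Delta g (L - K) (insert a A \<union> K))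
        - (\<Sum>K\<in>Pow L. Delta f K A * Delta g (L - K) (A \<union> K))"
    unfolding sum.Pow_insert[OF insert.hyps] sum.distrib[symmetric] sum_subtractf[symmetric]
    by (rule sum.cong[OF refl summand])
  then show ?case
    using insert by (simp add: Delta_insert)
qed

lemma Delta_sum_Pow_Pow:
  assumes "finite L" "finite A" "A \<inter> L = {}"
  shows "Delta (\<lambda>M. \<Sum>CC\<in>Pow (Pow M). \<phi> CC) L A = (\<Sum>CC | CC \<subseteq> Pow (A \<union> L) \<and> L \<subseteq> \<Union>CC. \<phi> CC)"
  using assms
proof (induction L arbitrary: A rule: finite_induct)
  case empty
  have "{CC. CC \<subseteq> Pow A} = Pow (Pow A)"
    by auto
  then show ?case
    by simp
next
  case (insert a L)
  define covers where "covers B = {CC. CC \<subseteq> Pow B \<and> L \<subseteq> \<Union>CC}" for B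
  have "covers (insert a A \<union> L)
      = {CC. CC \<subseteq> Pow (A \<union> insert a L) \<and> insert a L \<subseteq> \<Union>CC} \<union> covers (A \<union> L)"
    unfolding covers_def by blast
  moreover have "{CC. CC \<subseteq> Pow (A \<union> insert a L) \<and> insert a L \<subseteq> \<Union>CC} \<inter> covers (A \<union> L) = {}"
    using insert by (auto simp: covers_def)
  moreover have "finite (covers (insert a A \<union> L))"
    using insert by (auto simp: covers_def intro: finite_subset[of _ "Pow (Pow (insert a A \<union> L))"])
  ultimately show ?case
    using insert by (simp add: Delta_insert covers_def[symmetric] sum.union_disjoint)
qed

definition prod_Pow :: "('a set \<Rightarrow> 'b::comm_monoid_mult) \<Rightarrow> 'a set \<Rightarrow> 'b" where
  "prod_Pow w M = (\<Prod>C\<in>Pow M. w C)"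

lemma prod_Pow_insert:
  "finite M \<Longrightarrow> a \<notin> M \<Longrightarrow> prod_Pow w (insert a M) = prod_Pow w M * prod_Pow (\<lambda>C. w (insert a C)) M"
  by (simp add: prod_Pow_def prod.Pow_insert)

lemma Delta_prod_Pow_one_plus:
  assumes "finite L" "finite A" "A \<inter> L = {}"
  shows "Delta (prod_Pow (\<lambda>C. 1 + q C)) L A = (\<Sum>CC | CC \<subseteq> Pow (A \<union> L) \<and> L \<subseteq> \<Union>CC. \<Prod>C\<in>CC. q C)"
proof -
  have "prod_Pow (\<lambda>C. 1 + q C) M = (\<Sum>CC\<in>Pow (Pow M). \<Prod>C\<in>CC. q C)" if "finite M" for M
    using prod_add[of "Pow M" q "\<lambda>_. 1"] that by (simp add: prod_Pow_def add.commute)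
  then have "Delta (prod_Pow (\<lambda>C. 1 + q C)) L A = Delta (\<lambda>M. \<Sum>CC\<in>Pow (Pow M). \<Prod>C\<in>CC. q C) L A"
    using assms(1,2) by (intro Delta_cong) (meson finite_UnI finite_subset)
  then show ?thesis
    using Delta_sum_Pow_Pow[OF assms] by simp
qed

lemma Delta_prod_Pow_insert:
  fixes w :: "'a set \<Rightarrow> 'b::comm_ring_1"
  assumes "finite L" "finite A" "a \<notin> A" "a \<notin> L"
  shows "Delta (prod_Pow w) (insert a L) A
    = (\<Sum>K\<in>Pow L. Delta (prod_Pow w) K A * Delta (\<lambda>M. prod_Pow (\<lambda>C. w (insert a C)) M - 1) (L - K) (A \<union> K))"
proof -
  let ?w\<^sub>a = "\<lambda>C. w (insert a C)"
  have "Delta (prod_Pow w) L (insert a A) = Delta (\<lambda>M. prod_Pow w M * prod_Pow ?w\<^sub>a M) L A"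
    unfolding Delta_def
  proof (rule sum.cong)
    fix M assume "M \<in> Pow L"
    then have "finite (A \<union> M)" "a \<notin> A \<union> M"
      using assms finite_subset by auto
    then show "(-1) ^ card (L - M) * prod_Pow w (insert a A \<union> M)
        = (-1) ^ card (L - M) * (prod_Pow w (A \<union> M) * prod_Pow ?w\<^sub>a (A \<union> M))"
      by (simp add: prod_Pow_insert)
  qed simp
  then have "Delta (prod_Pow w) (insert a L) A
      = Delta (\<lambda>M. prod_Pow w M * prod_Pow ?w\<^sub>a M - prod_Pow w M) L A"
    using assms by (simp add: Delta_insert Delta_diff)
  also have "\<dots> = Delta (\<lambda>M. prod_Pow w M * (prod_Pow ?w\<^sub>a M - 1)) L A"
    by (simp add: algebra_simps)
  also have "\<dots> = (\<Sum>K\<in>Pow L. Delta (prod_Pow w) K A * Delta (\<lambda>M. prod_Pow ?w\<^sub>a M - 1) (L - K) (A \<union> K))"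
    using assms(1) by (rule Delta_mult)
  finally show ?thesis .
qed

lemma norm_prod_minus_one_le:
  fixes w :: "'i \<Rightarrow> 'b::{real_normed_algebra_1,comm_ring_1}"
  assumes "finite I" "0 \<le> c"
    and "\<And>i. i \<in> I \<Longrightarrow> norm (w i) \<le> 1 + p i"
    and "\<And>i. i \<in> I \<Longrightarrow> c * norm (w i - 1) \<le> p i"
  shows "c * norm ((\<Prod>i\<in>I. w i) - 1) \<le> (\<Prod>i\<in>I. 1 + p i) - 1"
  using assms(1,3,4)
proof (induction I rule: finite_induct)
  case empty
  then show ?case by simp
next
  case (insert j I)
  let ?z = "(\<Prod>i\<in>I. w i) - 1"
  have wj: "norm (w j) \<le> 1 + p j" "c * norm (w j - 1) \<le> p j"
    using insert.prems by auto
  have IH: "c * norm ?z \<le> (\<Prod>i\<in>I. 1 + p i) - 1"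
    using insert by auto
  have "(\<Prod>i\<in>insert j I. w i) - 1 = w j * ?z + (w j - 1)"
    using insert.hyps by (simp add: algebra_simps)
  then have "norm ((\<Prod>i\<in>insert j I. w i) - 1) \<le> norm (w j) * norm ?z + norm (w j - 1)"
    by (metis norm_triangle_le norm_mult_ineq add_right_mono)
  then have "c * norm ((\<Prod>i\<in>insert j I. w i) - 1) \<le> c * (norm (w j) * norm ?z + norm (w j - 1))"
    using assms(2) by (rule mult_left_mono)
  also have "\<dots> = norm (w j) * (c * norm ?z) + c * norm (w j - 1)"
    by (simp add: algebra_simps)
  also have "\<dots> \<le> (1 + p j) * ((\<Prod>i\<in>I. 1 + p i) - 1) + p j"
    using order_trans[OF norm_ge_zero wj(1)] assms(2) by (intro add_mono mult_mono wj IH) simp_all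
  also have "\<dots> = (\<Prod>i\<in>insert j I. 1 + p i) - 1"
    using insert.hyps by (simp add: algebra_simps)
  finally show ?case .
qed

text \<open>These are the hypotheses met by \<open>w C = W (insert x C)\<close> and \<open>p C = maxterm W r x (insert x C) - 1\<close>.
  After \<open>w\<close> has been shifted by a nonempty set \<open>T\<close> (\<open>C \<mapsto> w (T \<union> C)\<close>), the conditions for the
  sets \<open>S \<union> T\<close> give the weighted form with \<open>c = prod al T\<close>, which now includes \<open>S = {}\<close>.\<close>

definition dominated :: "('a \<Rightarrow> real) \<Rightarrow> 'a set \<Rightarrow> ('a set \<Rightarrow> complex) \<Rightarrow> ('a set \<Rightarrow> real) \<Rightarrow> bool" where
  "dominated al U w p \<longleftrightarrow>
     (\<forall>C\<subseteq>U. cmod (w C) \<le> 1 + p C \<and> (\<forall>S\<subseteq>C. S \<noteq> {} \<longrightarrow> cmod (w C - 1) * prod al S \<le> p C))"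

definition weight_dominated :: "('a \<Rightarrow> real) \<Rightarrow> real \<Rightarrow> 'a set \<Rightarrow> ('a set \<Rightarrow> complex) \<Rightarrow> ('a set \<Rightarrow> real) \<Rightarrow> bool" where
  "weight_dominated al c U w p \<longleftrightarrow> (\<forall>C\<subseteq>U. \<forall>S\<subseteq>C. c * cmod (w C - 1) * prod al S \<le> p C)"

lemma dominated_mono: "dominated al U w p \<Longrightarrow> V \<subseteq> U \<Longrightarrow> dominated al V w p"
  unfolding dominated_def by (meson subset_trans)

lemma dominated_shift:
  assumes "dominated al (insert a U) w p"
  shows "dominated al U (\<lambda>C. w (insert a C)) (\<lambda>C. p (insert a C))"
  unfolding dominated_def
proof (intro allI impI conjI)
  fix C assume "C \<subseteq> U"
  then have "insert a C \<subseteq> insert a U"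
    by blast
  then show "cmod (w (insert a C)) \<le> 1 + p (insert a C)"
    and "\<And>S. S \<subseteq> C \<Longrightarrow> S \<noteq> {} \<Longrightarrow> cmod (w (insert a C) - 1) * prod al S \<le> p (insert a C)"
    using assms unfolding dominated_def by blast+
qed

lemma weight_dominated_shift_of_dominated:
  assumes "dominated al (insert a U) w p" "finite U" "a \<notin> U"
  shows "weight_dominated al (al a) U (\<lambda>C. w (insert a C)) (\<lambda>C. p (insert a C))"
  unfolding weight_dominated_def
proof (intro allI impI)
  fix C S assume "C \<subseteq> U" "S \<subseteq> C"
  with assms(2,3) have "prod al (insert a S) = al a * prod al S"
    by (metis finite_subset prod.insert subsetD)
  moreover from \<open>C \<subseteq> U\<close> \<open>S \<subseteq> C\<close> have "cmod (w (insert a C) - 1) * prod al (insert a S) \<le> p (insert a C)"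
    using assms(1) unfolding dominated_def by (meson insert_mono insert_not_empty)
  ultimately show "al a * cmod (w (insert a C) - 1) * prod al S \<le> p (insert a C)"
    by (simp add: mult_ac)
qed

lemma weight_dominated_shift:
  assumes "weight_dominated al c (insert a U) w p" "finite U" "a \<notin> U"
  shows "weight_dominated al (c * al a) U (\<lambda>C. w (insert a C)) (\<lambda>C. p (insert a C))"
  unfolding weight_dominated_def
proof (intro allI impI)
  fix C S assume "C \<subseteq> U" "S \<subseteq> C"
  with assms(2,3) have "prod al (insert a S) = al a * prod al S"
    by (metis finite_subset prod.insert subsetD)
  moreover from \<open>C \<subseteq> U\<close> \<open>S \<subseteq> C\<close> have "c * cmod (w (insert a C) - 1) * prod al (insert a S) \<le> p (insert a C)"
    using assms(1) unfolding weight_dominated_def by (meson insert_mono)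
  ultimately show "c * al a * cmod (w (insert a C) - 1) * prod al S \<le> p (insert a C)"
    by (simp add: mult_ac)
qed

lemma norm_prod_Pow_le:
  assumes "dominated al A w p"
  shows "cmod (prod_Pow w A) \<le> prod_Pow (\<lambda>C. 1 + p C) A"
  unfolding prod_Pow_def prod_norm[symmetric]
  using assms by (intro prod_mono) (auto simp: dominated_def)

lemma norm_prod_Pow_minus_one_le:
  assumes "finite A" "0 \<le> c" "dominated al A w p" "weight_dominated al c A w p"
  shows "cmod (prod_Pow w A - 1) * c \<le> prod_Pow (\<lambda>C. 1 + p C) A - 1"
proof -
  have "c * cmod (prod_Pow w A - 1) \<le> prod_Pow (\<lambda>C. 1 + p C) A - 1"
    unfolding prod_Pow_def
  proof (rule norm_prod_minus_one_le)
    fix C assume "C \<in> Pow A"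
    then show "cmod (w C) \<le> 1 + p C" "c * cmod (w C - 1) \<le> p C"
      using assms(3,4) unfolding dominated_def weight_dominated_def
      by (metis PowD empty_subsetI mult.right_neutral prod.empty)+
  qed (use assms(1,2) in simp_all)
  then show ?thesis
    by (simp add: mult.commute)
qed

lemma norm_Delta_prod_Pow_insert_le:
  fixes w :: "'a set \<Rightarrow> complex"
  assumes "finite L" "finite A" "a \<notin> A" "a \<notin> L" "\<And>s. 0 \<le> al s" "0 \<le> c"
    and first: "\<And>K. K \<subseteq> L \<Longrightarrow> cmod (Delta (prod_Pow w) K A) * prod al K \<le> Delta (prod_Pow P) K A"
    and second: "\<And>K. K \<subseteq> L \<Longrightarrow>
      cmod (Delta (\<lambda>M. prod_Pow (\<lambda>C. w (insert a C)) M - 1) (L - K) (A \<union> K)) * prod al (L - K) * c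
        \<le> Delta (\<lambda>M. prod_Pow (\<lambda>C. P (insert a C)) M - 1) (L - K) (A \<union> K)"
  shows "cmod (Delta (prod_Pow w) (insert a L) A) * prod al L * c \<le> Delta (prod_Pow P) (insert a L) A"
proof -
  let ?x = "\<lambda>K. Delta (prod_Pow w) K A"
  let ?y = "\<lambda>K. Delta (\<lambda>M. prod_Pow (\<lambda>C. w (insert a C)) M - 1) (L - K) (A \<union> K)"
  let ?X = "\<lambda>K. Delta (prod_Pow P) K A"
  let ?Y = "\<lambda>K. Delta (\<lambda>M. prod_Pow (\<lambda>C. P (insert a C)) M - 1) (L - K) (A \<union> K)"
  have "cmod (Delta (prod_Pow w) (insert a L) A) * prod al L * c
      = cmod (\<Sum>K\<in>Pow L. ?x K * ?y K) * (prod al L * c)"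
    unfolding Delta_prod_Pow_insert[OF assms(1-4)] by (simp add: mult.assoc)
  also have "\<dots> \<le> (\<Sum>K\<in>Pow L. cmod (?x K * ?y K)) * (prod al L * c)"
    using assms(5,6) by (intro mult_right_mono norm_sum) (simp add: prod_nonneg)
  also have "\<dots> = (\<Sum>K\<in>Pow L. (cmod (?x K) * prod al K) * (cmod (?y K) * prod al (L - K) * c))"
    unfolding sum_distrib_right
  proof (rule sum.cong)
    fix K assume "K \<in> Pow L"
    then have "prod al L = prod al K * prod al (L - K)"
      using assms(1) prod.subset_diff[of K L al] by (simp add: mult.commute)
    then show "cmod (?x K * ?y K) * (prod al L * c)
        = cmod (?x K) * prod al K * (cmod (?y K) * prod al (L - K) * c)"
      by (simp add: norm_mult mult_ac)
  qed simp
  also have "\<dots> \<le> (\<Sum>K\<in>Pow L. ?X K * ?Y K)"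
  proof (intro sum_mono mult_mono)
    fix K assume "K \<in> Pow L"
    then show x: "cmod (?x K) * prod al K \<le> ?X K"
      and "cmod (?y K) * prod al (L - K) * c \<le> ?Y K"
      using first second by auto
    have "0 \<le> cmod (?x K) * prod al K"
      using assms(5) by (simp add: prod_nonneg)
    with x show "0 \<le> ?X K"
      by linarith
    show "0 \<le> cmod (?y K) * prod al (L - K) * c"
      using assms(5,6) by (simp add: prod_nonneg)
  qed
  also have "\<dots> = Delta (prod_Pow P) (insert a L) A"
    unfolding Delta_prod_Pow_insert[OF assms(1-4)] ..
  finally show ?thesis .
qed

lemma norm_Delta_prod_Pow_insert_bounds:
  assumes al: "\<And>s. 0 \<le> al s" and "finite L" "a \<notin> L"
    and IH1: "\<And>K A w p. K \<subseteq> L \<Longrightarrow> finite A \<Longrightarrow> A \<inter> K = {} \<Longrightarrow> dominated al (A \<union> K) w p \<Longrightarrow>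
      cmod (Delta (prod_Pow w) K A) * prod al K \<le> Delta (prod_Pow (\<lambda>C. 1 + p C)) K A"
    and IH2: "\<And>K A w p c. K \<subseteq> L \<Longrightarrow> finite A \<Longrightarrow> A \<inter> K = {} \<Longrightarrow> 0 \<le> c \<Longrightarrow>
      dominated al (A \<union> K) w p \<Longrightarrow> weight_dominated al c (A \<union> K) w p \<Longrightarrow>
      cmod (Delta (\<lambda>M. prod_Pow w M - 1) K A) * prod al K * c \<le> Delta (\<lambda>M. prod_Pow (\<lambda>C. 1 + p C) M - 1) K A"
    and A: "finite A" "A \<inter> insert a L = {}" and dom: "dominated al (A \<union> insert a L) w p"
  shows "cmod (Delta (prod_Pow w) (insert a L) A) * prod al (insert a L)
      \<le> Delta (prod_Pow (\<lambda>C. 1 + p C)) (insert a L) A"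
    and "0 \<le> c \<Longrightarrow> weight_dominated al c (A \<union> insert a L) w p \<Longrightarrow>
      cmod (Delta (\<lambda>M. prod_Pow w M - 1) (insert a L) A) * prod al (insert a L) * c
        \<le> Delta (\<lambda>M. prod_Pow (\<lambda>C. 1 + p C) M - 1) (insert a L) A"
proof -
  have U: "A \<union> insert a L = insert a (A \<union> L)" "finite (A \<union> L)" "a \<notin> A \<union> L"
    using A assms(2,3) by auto
  have bound: "cmod (Delta (prod_Pow w) (insert a L) A) * prod al L * c'
      \<le> Delta (prod_Pow (\<lambda>C. 1 + p C)) (insert a L) A"
    if "0 \<le> c'" "weight_dominated al c' (A \<union> L) (\<lambda>C. w (insert a C)) (\<lambda>C. p (insert a C))" for c'
  proof (rule norm_Delta_prod_Pow_insert_le)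
    fix K assume "K \<subseteq> L"
    have "A \<inter> K = {}"
      using A \<open>K \<subseteq> L\<close> by auto
    moreover have "dominated al (A \<union> K) w p"
      by (rule dominated_mono[OF dom]) (use \<open>K \<subseteq> L\<close> in blast)
    ultimately show "cmod (Delta (prod_Pow w) K A) * prod al K \<le> Delta (prod_Pow (\<lambda>C. 1 + p C)) K A"
      using IH1 \<open>K \<subseteq> L\<close> A(1) by blast
    have "A \<union> K \<union> (L - K) = A \<union> L" "finite (A \<union> K)" "(A \<union> K) \<inter> (L - K) = {}"
      using \<open>K \<subseteq> L\<close> A assms(2) finite_subset by auto
    then show "cmod (Delta (\<lambda>M. prod_Pow (\<lambda>C. w (insert a C)) M - 1) (L - K) (A \<union> K)) * prod al (L - K) * c'
        \<le> Delta (\<lambda>M. prod_Pow (\<lambda>C. 1 + p (insert a C)) M - 1) (L - K) (A \<union> K)"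
      using IH2[of "L - K" "A \<union> K" c' "\<lambda>C. w (insert a C)" "\<lambda>C. p (insert a C)"] that
        dominated_shift[of al a "A \<union> L" w p] dom U(1) by simp
  qed (use A assms(2,3) U that al in auto)
  show "cmod (Delta (prod_Pow w) (insert a L) A) * prod al (insert a L)
      \<le> Delta (prod_Pow (\<lambda>C. 1 + p C)) (insert a L) A"
    using bound[OF al weight_dominated_shift_of_dominated[of al a "A \<union> L" w p]] dom U assms(2,3)
    by (simp add: mult_ac)
  assume "0 \<le> c" "weight_dominated al c (A \<union> insert a L) w p"
  then show "cmod (Delta (\<lambda>M. prod_Pow w M - 1) (insert a L) A) * prod al (insert a L) * c
      \<le> Delta (\<lambda>M. prod_Pow (\<lambda>C. 1 + p C) M - 1) (insert a L) A"
    using bound[of "c * al a"] weight_dominated_shift[of al c a "A \<union> L" w p] U assms(2,3) al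
    by (simp add: Delta_minus_const mult_ac)
qed

text \<open>The plain and the weighted bound are proved by one induction, since each step needs both.\<close>

lemma norm_Delta_prod_Pow_le:
  assumes "\<And>s. 0 \<le> al s" "finite L"
  shows "\<forall>A. finite A \<longrightarrow> A \<inter> L = {} \<longrightarrow>
      (\<forall>w p. dominated al (A \<union> L) w p \<longrightarrow>
         cmod (Delta (prod_Pow w) L A) * prod al L \<le> Delta (prod_Pow (\<lambda>C. 1 + p C)) L A) \<and>
      (\<forall>w p c. 0 \<le> c \<longrightarrow> dominated al (A \<union> L) w p \<longrightarrow> weight_dominated al c (A \<union> L) w p \<longrightarrow>
         cmod (Delta (\<lambda>M. prod_Pow w M - 1) L A) * prod al L * c
           \<le> Delta (\<lambda>M. prod_Pow (\<lambda>C. 1 + p C) M - 1) L A)"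
  using assms(2)
proof (induction L rule: finite_psubset_induct)
  case (psubset L)
  show ?case
  proof (cases "L = {}")
    case True
    show ?thesis
    proof (intro allI impI conjI)
      fix A w p assume "dominated al (A \<union> L) w p"
      then show "cmod (Delta (prod_Pow w) L A) * prod al L \<le> Delta (prod_Pow (\<lambda>C. 1 + p C)) L A"
        using True norm_prod_Pow_le by simp
    next
      fix A w p c assume "finite A" "0 \<le> c" "dominated al (A \<union> L) w p" "weight_dominated al c (A \<union> L) w p"
      then show "cmod (Delta (\<lambda>M. prod_Pow w M - 1) L A) * prod al L * c
          \<le> Delta (\<lambda>M. prod_Pow (\<lambda>C. 1 + p C) M - 1) L A"
        using True norm_prod_Pow_minus_one_le by simp
    qed
  next
    case False
    then obtain a L0 where L: "L = insert a L0" "a \<notin> L0"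
      by (meson ex_in_conv mk_disjoint_insert)
    then have "finite L0" "\<And>K. K \<subseteq> L0 \<Longrightarrow> K \<subset> L"
      using psubset.hyps by auto
    note IH = psubset.IH[OF this(2), rule_format]
    show ?thesis
      unfolding L
      using norm_Delta_prod_Pow_insert_bounds[OF assms(1) \<open>finite L0\<close> L(2)
          IH[THEN conjunct1, rule_format] IH[THEN conjunct2, rule_format]]
      by blast
  qed
qed

section \<open>Boltzmann factors\<close>

lemma kappa_pt_eq_prod_Pow:
  assumes "x \<notin> B"
  shows "kappa_pt W x B = prod_Pow (\<lambda>C. W (insert x C)) B"
proof -
  have "{S. S \<subseteq> {x} \<and> S \<noteq> {}} = {{x}}"
    by auto
  then show ?thesis
    using assms by (simp add: kappa_pt_def kappa_def Wcond_def prod_Pow_def)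
qed

lemma gamma_eq_Delta:
  assumes "x \<notin> N"
  shows "gamma W x N = Delta (prod_Pow (\<lambda>C. W (insert x C))) N {}"
  unfolding gamma_def gamma_cond_eq_Delta
  using assms by (intro Delta_cong) (auto intro!: kappa_pt_eq_prod_Pow)

lemma maxterm_ge:
  assumes "finite X"
  shows "cmod (W X) \<le> maxterm W r x X"
    and "S \<subseteq> X - {x} \<Longrightarrow> S \<noteq> {} \<Longrightarrow> 1 + cmod (W X - 1) * alpha_pow r S \<le> maxterm W r x X"
proof -
  have "finite {S. S \<subseteq> X - {x} \<and> S \<noteq> {}}"
    using assms by (auto intro: finite_subset[of _ "Pow (X - {x})"])
  then show "cmod (W X) \<le> maxterm W r x X"
    and "S \<subseteq> X - {x} \<Longrightarrow> S \<noteq> {} \<Longrightarrow> 1 + cmod (W X - 1) * alpha_pow r S \<le> maxterm W r x X"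
    unfolding maxterm_def by (auto intro: Max_ge)
qed

lemma dominated_maxterm:
  assumes "x \<notin> U" "finite U"
  shows "dominated (alpha r) U (\<lambda>C. W (insert x C)) (\<lambda>C. maxterm W r x (insert x C) - 1)"
  unfolding dominated_def
proof (intro allI impI conjI)
  fix C assume "C \<subseteq> U"
  then have C: "finite (insert x C)" "insert x C - {x} = C"
    using assms finite_subset by auto
  then show "cmod (W (insert x C)) \<le> 1 + (maxterm W r x (insert x C) - 1)"
    using maxterm_ge(1)[OF C(1)] by simp
  fix S assume "S \<subseteq> C" "S \<noteq> {}"
  then have "1 + cmod (W (insert x C) - 1) * alpha_pow r S \<le> maxterm W r x (insert x C)"
    using maxterm_ge(2)[OF C(1)] C(2) by simp
  then show "cmod (W (insert x C) - 1) * prod (alpha r) S \<le> maxterm W r x (insert x C) - 1"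
    by (simp add: alpha_pow_def)
qed

lemma bij_betw_insert_families:
  assumes "x \<notin> N" "finite N"
  shows "bij_betw (\<lambda>CC. insert x ` CC) {CC. CC \<subseteq> Pow N \<and> \<Union>CC = N} {XX. XX \<subseteq> Fx x \<and> \<Union>XX - {x} = N}"
proof (rule bij_betw_byWitness[where f' = "\<lambda>XX. (\<lambda>X. X - {x}) ` XX"])
  show "\<forall>CC\<in>{CC. CC \<subseteq> Pow N \<and> \<Union>CC = N}. (\<lambda>X. X - {x}) ` insert x ` CC = CC"
  proof
    fix CC assume "CC \<in> {CC. CC \<subseteq> Pow N \<and> \<Union>CC = N}"
    then have "(\<lambda>X. X - {x}) ` insert x ` CC = (\<lambda>C. C) ` CC"
      unfolding image_image using assms(1) by (intro image_cong) auto
    then show "(\<lambda>X. X - {x}) ` insert x ` CC = CC"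
      by simp
  qed
  show "\<forall>XX\<in>{XX. XX \<subseteq> Fx x \<and> \<Union>XX - {x} = N}. insert x ` (\<lambda>X. X - {x}) ` XX = XX"
  proof
    fix XX assume "XX \<in> {XX. XX \<subseteq> Fx x \<and> \<Union>XX - {x} = N}"
    then have "insert x ` (\<lambda>X. X - {x}) ` XX = (\<lambda>X. X) ` XX"
      unfolding image_image by (intro image_cong) (auto simp: Fx_def)
    then show "insert x ` (\<lambda>X. X - {x}) ` XX = XX"
      by simp
  qed
  show "(\<lambda>CC. insert x ` CC) ` {CC. CC \<subseteq> Pow N \<and> \<Union>CC = N} \<subseteq> {XX. XX \<subseteq> Fx x \<and> \<Union>XX - {x} = N}"
  proof
    fix XX assume "XX \<in> (\<lambda>CC. insert x ` CC) ` {CC. CC \<subseteq> Pow N \<and> \<Union>CC = N}"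
    then obtain CC where CC: "CC \<subseteq> Pow N" "\<Union>CC = N" "XX = insert x ` CC"
      by blast
    then have "XX \<subseteq> Fx x"
      using assms(2) by (auto simp: Fx_def intro: finite_subset)
    moreover have "\<Union>XX - {x} = N"
      using CC assms(1) by blast
    ultimately show "XX \<in> {XX. XX \<subseteq> Fx x \<and> \<Union>XX - {x} = N}"
      by blast
  qed
  show "(\<lambda>XX. (\<lambda>X. X - {x}) ` XX) ` {XX. XX \<subseteq> Fx x \<and> \<Union>XX - {x} = N} \<subseteq> {CC. CC \<subseteq> Pow N \<and> \<Union>CC = N}"
    by auto
qed

lemma sum_prod_Fx_families:
  assumes "x \<notin> N" "finite N"
  shows "(\<Sum>XX | XX \<subseteq> Fx x \<and> \<Union>XX - {x} = N. \<Prod>X\<in>XX. g X)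
    = (\<Sum>CC | CC \<subseteq> Pow N \<and> \<Union>CC = N. \<Prod>C\<in>CC. g (insert x C))"
proof -
  have "(\<Sum>XX | XX \<subseteq> Fx x \<and> \<Union>XX - {x} = N. \<Prod>X\<in>XX. g X)
      = (\<Sum>CC | CC \<subseteq> Pow N \<and> \<Union>CC = N. \<Prod>X\<in>insert x ` CC. g X)"
    using sum.reindex_bij_betw[OF bij_betw_insert_families[OF assms], of "\<lambda>XX. \<Prod>X\<in>XX. g X"] by simp
  also have "\<dots> = (\<Sum>CC | CC \<subseteq> Pow N \<and> \<Union>CC = N. \<Prod>C\<in>CC. g (insert x C))"
  proof (rule sum.cong)
    fix CC assume "CC \<in> {CC. CC \<subseteq> Pow N \<and> \<Union>CC = N}"
    then have "inj_on (insert x) CC"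
      using assms(1) by (auto simp: inj_on_def insert_ident)
    then show "(\<Prod>X\<in>insert x ` CC. g X) = (\<Prod>C\<in>CC. g (insert x C))"
      by (simp add: prod.reindex)
  qed simp
  finally show ?thesis .
qed

theorem lemma6p4:
  fixes W :: "'a::countable set \<Rightarrow> complex"
    and r :: "'a \<Rightarrow> real"
    and x :: 'a
    and N :: "'a set"
  assumes r_range: "\<And>s. 0 \<le> r s \<and> r s < 1"
    and N_fin: "finite N"
    and x_notin: "x \<notin> N"
  shows "cmod (gamma W x N) * alpha_pow r N
    \<le> (\<Sum>XX\<in>{XX. XX \<subseteq> Fx x \<and> \<Union>XX - {x} = N}.
          \<Prod>X\<in>XX. (maxterm W r x X - 1))"
proof -
  define w where "w = (\<lambda>C. W (insert x C))"
  define p where "p = (\<lambda>C. maxterm W r x (insert x C) - 1)"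
  have alpha_nonneg: "0 \<le> alpha r s" for s
    using r_range[of s] by (simp add: alpha_def)
  have "dominated (alpha r) ({} \<union> N) w p"
    using dominated_maxterm[OF x_notin N_fin] by (simp add: w_def p_def)
  then have "cmod (Delta (prod_Pow w) N {}) * prod (alpha r) N \<le> Delta (prod_Pow (\<lambda>C. 1 + p C)) N {}"
    using norm_Delta_prod_Pow_le[where al = "alpha r", OF alpha_nonneg N_fin, rule_format, OF finite.emptyI Int_empty_left,
        THEN conjunct1, rule_format] by blast
  also have "\<dots> = (\<Sum>CC | CC \<subseteq> Pow N \<and> \<Union>CC = N. \<Prod>C\<in>CC. p C)"
  proof -
    have "{CC. CC \<subseteq> Pow ({} \<union> N) \<and> N \<subseteq> \<Union>CC} = {CC. CC \<subseteq> Pow N \<and> \<Union>CC = N}"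
      by blast
    then show ?thesis
      using Delta_prod_Pow_one_plus[OF N_fin finite.emptyI Int_empty_left] by simp
  qed
  also have "\<dots> = (\<Sum>XX | XX \<subseteq> Fx x \<and> \<Union>XX - {x} = N. \<Prod>X\<in>XX. maxterm W r x X - 1)"
    unfolding p_def by (rule sum_prod_Fx_families[OF x_notin N_fin, symmetric])
  finally show ?thesis
    using gamma_eq_Delta[OF x_notin] by (simp add: w_def alpha_pow_def)
qed

end
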